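(* Let $\mathfrak{g}=\mathfrak{sl}_2(\mathbb{C})$. For every integer $n\ge1$, \[S^{\mathfrak{g}}_{2n}(\mathfrak{g},\mathfrak{g})=0\quad\text{and}\quad S^{\mathfrak{g}}_{2n+1}(\mathfrak{g},\mathfrak{g})=\mathbb{C}\,B^{\mathfrak{g}}_n.\]
   Context: $S^{\mathfrak{g}}_m(\mathfrak{g},\mathfrak{g})$ denotes the space of symmetric $\mathbb{C}$-multilinear maps $B:\mathfrak{g}^m\to\mathfrak{g}$ that are invariant: $[y,B(x_1,\ldots,x_m)]=\sum_{i=1}^mB(x_1,\ldots,[y,x_i],\ldots,x_m)$ for all $y,x_1,\ldots,x_m\in\mathfrak{g}$. Let $\langle\cdot,\cdot\rangle$ be the symmetric bilinear form on $\mathfrak{g}$ with $\langle x,x\rangle=\frac12\mathrm{tr}(\mathrm{ad}_x^2)$. For $n\ge1$ let $P_n(x_1,\ldots,x_{2n})=\frac{1}{(2n)!}\sum_{\sigma\in S_{2n}}\langle x_{\sigma(1)},x_{\sigma(2)}\rangle\cdots\langle x_{\sigma(2n-1)},x_{\sigma(2n)}\rangle$, and $B^{\mathfrak{g}}_n(x_1,\ldots,x_{2n+1})=\sum_{k=1}^{2n+1}P_n(x_1,\ldots,\hat{x}_k,\ldots,x_{2n+1})\,x_k$ (hat denotes omission). *)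

theory Defs
  imports "HOL-Analysis.Analysis"
begin

type_synonym mat2 = "complex^2^2"

definition mtrace :: "mat2 \<Rightarrow> complex" where
  "mtrace A = A$1$1 + A$2$2"

definition sl2 :: "mat2 set" where
  "sl2 = {A. mtrace A = 0}"

definition lie :: "mat2 \<Rightarrow> mat2 \<Rightarrow> mat2" where
  "lie x y = x ** y - y ** x"

definition smul :: "complex \<Rightarrow> mat2 \<Rightarrow> mat2" where
  "smul c A = (\<chi> i j. c * A$i$j)"

definition Ee :: mat2 where "Ee = (\<chi> i j. if i = 1 \<and> j = 2 then 1 else 0)"
definition Ff :: mat2 where "Ff = (\<chi> i j. if i = 2 \<and> j = 1 then 1 else 0)"
definition Hh :: mat2 where
  "Hh = (\<chi> i j. if i = j then (if i = 1 then 1 else -1) else 0)"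

text \<open>Trace of an endomorphism T of sl_2, computed as the trace of its matrix in
the basis (e,f,h): the coordinates of a traceless A are (A12, A21, A11).\<close>
definition tr_g :: "(mat2 \<Rightarrow> mat2) \<Rightarrow> complex" where
  "tr_g T = (T Ee)$1$2 + (T Ff)$2$1 + (T Hh)$1$1"

definition form :: "mat2 \<Rightarrow> mat2 \<Rightarrow> complex" where
  "form x y = tr_g (\<lambda>z. lie x (lie y z)) / 2"

text \<open>m-linear maps g^m -> g are represented as functions on lists; they are
normalised to be 0 on lists not of length m with entries in sl_2.\<close>
definition dom_g :: "nat \<Rightarrow> mat2 list set" where
  "dom_g m = {xs. length xs = m \<and> set xs \<subseteq> sl2}"

definition S_inv :: "nat \<Rightarrow> (mat2 list \<Rightarrow> mat2) set" where
  "S_inv m = {B.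
     (\<forall>xs. xs \<notin> dom_g m \<longrightarrow> B xs = 0) \<and>
     (\<forall>xs \<in> dom_g m. B xs \<in> sl2) \<and>
     (\<forall>xs \<in> dom_g m. \<forall>i<m. \<forall>x\<in>sl2. \<forall>y\<in>sl2. \<forall>a b.
        B (xs[i := smul a x + smul b y]) = smul a (B (xs[i := x])) + smul b (B (xs[i := y]))) \<and>
     (\<forall>xs \<in> dom_g m. \<forall>p. p permutes {..<m} \<longrightarrow> B (map (\<lambda>i. xs ! p i) [0..<m]) = B xs) \<and>
     (\<forall>xs \<in> dom_g m. \<forall>y\<in>sl2.
        lie y (B xs) = (\<Sum>i<m. B (xs[i := lie y (xs ! i)])))}"

definition P_poly :: "nat \<Rightarrow> mat2 list \<Rightarrow> complex" where
  "P_poly n xs = (1 / of_nat (fact (2*n))) *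
     (\<Sum>\<sigma>\<in>{\<sigma>. \<sigma> permutes {..<2*n}}. \<Prod>j<n. form (xs ! \<sigma> (2*j)) (xs ! \<sigma> (2*j+1)))"

definition B_g :: "nat \<Rightarrow> mat2 list \<Rightarrow> mat2" where
  "B_g n xs = (if xs \<in> dom_g (2*n+1) then
     (\<Sum>k<2*n+1. smul (P_poly n (take k xs @ drop (Suc k) xs)) (xs ! k)) else 0)"

end

theory Submission
  imports Defs
begin

text \<open>An invariant B is determined by its values on the monomials e^a f^b h^c: multilinearity
  reduces it to lists of basis vectors and symmetry to their multiplicities. Invariance under e
  and f expresses each such value through values with fewer e's and f's, so B vanishes as soon as
  B(h,...,h) does, and invariance under h makes B(h,...,h) a multiple of h. For m = 2N the values
  of B on the monomials e^a f^a h^(2N-2a) and e^(a+1) f^a h^(2N-2a-1) obey a recursion whose last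
  step, at a = N, forces this multiple to vanish. For m = 2n+1, B_n is invariant because the form
  is, and B_n(h,...,h) = (2n+1) 4^n h is nonzero, so B - c B_n vanishes for a suitable c.\<close>

section \<open>sl_2 in coordinates\<close>

lemma mat2_eq_iff:
  "(A::mat2) = B \<longleftrightarrow> A$1$1 = B$1$1 \<and> A$1$2 = B$1$2 \<and> A$2$1 = B$2$1 \<and> A$2$2 = B$2$2"
  by (auto simp add: vec_eq_iff forall_2)

lemma lie_nth [simp]:
  "(lie x y)$1$1 = x$1$2*y$2$1 - y$1$2*x$2$1"
  "(lie x y)$2$2 = x$2$1*y$1$2 - y$2$1*x$1$2"
  "(lie x y)$1$2 = x$1$1*y$1$2 + x$1$2*y$2$2 - y$1$1*x$1$2 - y$1$2*x$2$2"
  "(lie x y)$2$1 = x$2$1*y$1$1 + x$2$2*y$2$1 - y$2$1*x$1$1 - y$2$2*x$2$1"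
  by (simp_all add: lie_def matrix_matrix_mult_def sum_2 algebra_simps)

lemma smul_nth [simp]: "(smul c A)$i$j = c * A$i$j"
  by (simp add: smul_def)

lemma basis_nth [simp]:
  "Ee$1$1 = 0" "Ee$1$2 = 1" "Ee$2$1 = 0" "Ee$2$2 = 0"
  "Ff$1$1 = 0" "Ff$1$2 = 0" "Ff$2$1 = 1" "Ff$2$2 = 0"
  "Hh$1$1 = 1" "Hh$1$2 = 0" "Hh$2$1 = 0" "Hh$2$2 = -1"
  by (simp_all add: Ee_def Ff_def Hh_def)

lemma sl2_iff: "A \<in> sl2 \<longleftrightarrow> A$1$1 + A$2$2 = 0"
  by (simp add: sl2_def mtrace_def)

lemma basis_in_sl2 [simp]: "Ee \<in> sl2" "Ff \<in> sl2" "Hh \<in> sl2" "0 \<in> sl2"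
  by (simp_all add: sl2_iff)

lemma lie_in_sl2 [simp]: "lie x y \<in> sl2"
  by (simp add: sl2_iff)

lemma smul_in_sl2 [simp]: "A \<in> sl2 \<Longrightarrow> smul c A \<in> sl2"
proof -
  have "(smul c A)$1$1 + (smul c A)$2$2 = c * (A$1$1 + A$2$2)"
    by (simp add: algebra_simps)
  then show "A \<in> sl2 \<Longrightarrow> smul c A \<in> sl2"
    by (simp add: sl2_iff)
qed

lemma add_in_sl2 [simp]: "A \<in> sl2 \<Longrightarrow> B \<in> sl2 \<Longrightarrow> A + B \<in> sl2"
proof -
  have "(A + B)$1$1 + (A + B)$2$2 = (A$1$1 + A$2$2) + (B$1$1 + B$2$2)"
    by (simp add: algebra_simps)
  then show "A \<in> sl2 \<Longrightarrow> B \<in> sl2 \<Longrightarrow> A + B \<in> sl2"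
    by (simp add: sl2_iff)
qed

lemma sum_in_sl2: "(\<And>k. k \<in> S \<Longrightarrow> f k \<in> sl2) \<Longrightarrow> sum f S \<in> sl2"
  by (induction S rule: infinite_finite_induct) auto

lemma sl2_basis_expansion:
  "x \<in> sl2 \<Longrightarrow> x = smul (x$1$2) Ee + smul 1 (smul (x$2$1) Ff + smul (x$1$1) Hh)"
  by (simp add: mat2_eq_iff sl2_iff eq_neg_iff_add_eq_0 add.commute)

lemma smul_0 [simp]: "smul 0 A = 0" "smul c 0 = 0"
  by (simp_all add: mat2_eq_iff)

lemma smul_1 [simp]: "smul 1 A = A"
  by (simp add: mat2_eq_iff)

lemma smul_smul [simp]: "smul a (smul b A) = smul (a * b) A"
  by (simp add: mat2_eq_iff)

lemma smul_eq_0_iff: "c \<noteq> 0 \<Longrightarrow> smul c A = 0 \<longleftrightarrow> A = 0"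
  by (simp add: mat2_eq_iff)

lemma smul_add_right: "smul c (A + B) = smul c A + smul c B"
  by (simp add: mat2_eq_iff algebra_simps)

lemma smul_add_left: "smul (a + b) A = smul a A + smul b A"
  by (simp add: mat2_eq_iff algebra_simps)

lemma smul_sum_right: "smul c (sum f S) = (\<Sum>k\<in>S. smul c (f k))"
  by (induction S rule: infinite_finite_induct) (simp_all add: smul_add_right)

lemma sum_smul_left: "(\<Sum>k\<in>S. smul (g k) A) = smul (sum g S) A"
  by (induction S rule: infinite_finite_induct) (simp_all add: smul_add_left)

lemma sum_constant_mat2: "(\<Sum>k\<in>S. (A::mat2)) = smul (of_nat (card S)) A"
  using sum_smul_left[of "\<lambda>_. 1" A S] by simp

lemma lie_add_right: "lie y (A + B) = lie y A + lie y B"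
  by (simp add: mat2_eq_iff algebra_simps)

lemma lie_smul_right: "lie y (smul c A) = smul c (lie y A)"
  by (simp add: mat2_eq_iff algebra_simps)

lemma lie_0_right [simp]: "lie y 0 = 0"
  by (simp add: lie_def)

lemma lie_sum_right: "lie y (sum f S) = (\<Sum>k\<in>S. lie y (f k))"
  by (induction S rule: infinite_finite_induct) (simp_all add: lie_add_right)

lemma lie_basis [simp]:
  "lie Ee Ee = 0" "lie Ee Ff = Hh" "lie Ee Hh = smul (-2) Ee"
  "lie Ff Ee = smul (-1) Hh" "lie Ff Ff = 0" "lie Ff Hh = smul 2 Ff"
  "lie Hh Ee = smul 2 Ee" "lie Hh Ff = smul (-2) Ff" "lie Hh Hh = 0"
  by (simp_all add: mat2_eq_iff)

lemma weight_0_vector: "X \<in> sl2 \<Longrightarrow> lie Hh X = 0 \<Longrightarrow> X = smul (X$1$1) Hh"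
  by (simp add: mat2_eq_iff sl2_iff eq_neg_iff_add_eq_0 add.commute)

lemma form_eq:
  "form x y = (x$1$1 - x$2$2) * (y$1$1 - y$2$2) + 2 * (x$1$2 * y$2$1 + x$2$1 * y$1$2)"
  by (simp add: form_def tr_g_def field_simps)

lemma form_linear_left: "form (smul a x + smul b y) v = a * form x v + b * form y v"
  by (simp add: form_eq algebra_simps)

lemma form_linear_right: "form u (smul a x + smul b y) = a * form u x + b * form u y"
  by (simp add: form_eq algebra_simps)

lemma form_invariant: "form (lie y u) v + form u (lie y v) = 0"
  by (simp add: form_eq algebra_simps)

lemma form_Hh_Hh: "form Hh Hh = 4"
  by (simp add: form_eq)

lemma length_dom_g: "xs \<in> dom_g m \<Longrightarrow> length xs = m"
  by (simp add: dom_g_def)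

lemma nth_in_sl2_dom_g: "xs \<in> dom_g m \<Longrightarrow> i < m \<Longrightarrow> xs!i \<in> sl2"
  by (auto simp: dom_g_def)

lemma list_update_in_dom_g: "xs \<in> dom_g m \<Longrightarrow> z \<in> sl2 \<Longrightarrow> xs[i := z] \<in> dom_g m"
  by (auto simp: dom_g_def dest: set_update_subset_insert[THEN subsetD])

lemma mset_eq_imp_dom_g_iff: "mset xs = mset ys \<Longrightarrow> xs \<in> dom_g m \<longleftrightarrow> ys \<in> dom_g m"
  by (simp add: dom_g_def flip: set_mset_mset size_mset)

section \<open>Invariant symmetric maps on monomials\<close>

text \<open>Symmetric maps only see the multiset of their arguments, so this list stands for the
  monomial e^a f^b h^c.\<close>

definition monomial :: "nat \<Rightarrow> nat \<Rightarrow> nat \<Rightarrow> mat2 list" where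
  "monomial a b c = replicate a Ee @ replicate b Ff @ replicate c Hh"

lemma monomial_in_dom_g: "a + b + c = m \<Longrightarrow> monomial a b c \<in> dom_g m"
  by (auto simp: monomial_def dom_g_def)

lemma length_monomial [simp]: "length (monomial a b c) = a + b + c"
  by (simp add: monomial_def)

lemma mset_monomial:
  "mset (monomial a b c) = replicate_mset a Ee + replicate_mset b Ff + replicate_mset c Hh"
  by (simp add: monomial_def)

lemma nth_monomial:
  "i < a + b + c \<Longrightarrow> monomial a b c ! i = (if i < a then Ee else if i < a + b then Ff else Hh)"
  by (auto simp: monomial_def nth_append)

lemma monomial_Suc_Ee: "monomial (Suc a) b c = Ee # monomial a b c"
  by (simp add: monomial_def)

lemma mset_basis_list:
  "set xs \<subseteq> {Ee, Ff, Hh} \<Longrightarrow>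
   mset xs = mset (monomial (count (mset xs) Ee) (count (mset xs) Ff) (count (mset xs) Hh))"
proof (induction xs)
  case Nil
  then show ?case by (simp add: monomial_def)
next
  case (Cons x xs)
  then show ?case
    by (auto simp: mset_monomial mat2_eq_iff)
qed

lemma mset_monomial_update:
  assumes "i < a + b + c"
  shows "mset ((monomial a b c)[i := z]) = mset (z #
    (if i < a then monomial (a - 1) b c else if i < a + b then monomial a (b - 1) c else monomial a b (c - 1)))"
  using assms by (cases a; cases b; cases c) (auto simp: mset_update nth_monomial mset_monomial)

lemma sum_three_blocks:
  "(\<Sum>i<a + b + c. if i < a then X else if i < a + b then Y else Z) =
   smul (of_nat a) X + smul (of_nat b) Y + smul (of_nat c) (Z::mat2)"
proof -
  let ?g = "\<lambda>i. if i < a then X else if i < a + b then Y else Z"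
  have "(\<Sum>i<a + b + c. ?g i) = (\<Sum>i\<in>{0..<a}. ?g i) + (\<Sum>i\<in>{a..<a + b}. ?g i) + (\<Sum>i\<in>{a + b..<a + b + c}. ?g i)"
    using sum.atLeastLessThan_concat[of 0 a "a + b" ?g] sum.atLeastLessThan_concat[of 0 "a + b" "a + b + c" ?g]
    by (simp add: lessThan_atLeast0)
  also have "\<dots> = (\<Sum>i\<in>{0..<a}. X) + (\<Sum>i\<in>{a..<a + b}. Y) + (\<Sum>i\<in>{a + b..<a + b + c}. Z)"
    by (intro arg_cong2[where f = "(+)"] sum.cong) auto
  also have "\<dots> = smul (of_nat a) X + smul (of_nat b) Y + smul (of_nat c) Z"
    by (simp only: sum_constant_mat2 card_atLeastLessThan) simp
  finally show ?thesis .
qed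

context
  fixes B m
  assumes B: "B \<in> S_inv m"
begin

lemma S_inv_outside: "xs \<notin> dom_g m \<Longrightarrow> B xs = 0"
  using B by (simp add: S_inv_def)

lemma S_inv_in_sl2: "B xs \<in> sl2"
  using B by (cases "xs \<in> dom_g m") (simp_all add: S_inv_def)

lemma S_inv_linear:
  "xs \<in> dom_g m \<Longrightarrow> i < m \<Longrightarrow> x \<in> sl2 \<Longrightarrow> y \<in> sl2 \<Longrightarrow>
   B (xs[i := smul a x + smul b y]) = smul a (B (xs[i := x])) + smul b (B (xs[i := y]))"
  using B unfolding S_inv_def by blast

lemma S_inv_invariant:
  "xs \<in> dom_g m \<Longrightarrow> y \<in> sl2 \<Longrightarrow> lie y (B xs) = (\<Sum>i<m. B (xs[i := lie y (xs ! i)]))"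
  using B unfolding S_inv_def by blast

lemma S_inv_permute:
  "xs \<in> dom_g m \<Longrightarrow> p permutes {..<m} \<Longrightarrow> B (map (\<lambda>i. xs ! p i) [0..<m]) = B xs"
  using B unfolding S_inv_def by blast

lemma S_inv_mset_eq:
  assumes "mset xs = mset ys"
  shows "B xs = B ys"
proof (cases "ys \<in> dom_g m")
  case True
  obtain p where p: "p permutes {..<length ys}" "permute_list p ys = xs"
    using mset_eq_permutation[OF assms] by blast
  have "length ys = m"
    using True by (rule length_dom_g)
  with p have "xs = map (\<lambda>i. ys ! p i) [0..<m]"
    by (simp add: permute_list_def)
  with p \<open>length ys = m\<close> show ?thesis
    using S_inv_permute[OF True] by simp
next
  case False
  then have "xs \<notin> dom_g m"
    using mset_eq_imp_dom_g_iff[OF assms] by blast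
  with False show ?thesis
    by (simp add: S_inv_outside)
qed

lemma S_inv_basis_expansion:
  assumes xs: "xs \<in> dom_g m" "i < m" and x: "x \<in> sl2"
  shows "B (xs[i := x]) =
    smul (x$1$2) (B (xs[i := Ee])) + smul (x$2$1) (B (xs[i := Ff])) + smul (x$1$1) (B (xs[i := Hh]))"
proof -
  let ?w = "smul (x$2$1) Ff + smul (x$1$1) Hh"
  have "B (xs[i := x]) = B (xs[i := smul (x$1$2) Ee + smul 1 ?w])"
    using sl2_basis_expansion[OF x] by simp
  also have "\<dots> = smul (x$1$2) (B (xs[i := Ee])) + smul 1 (B (xs[i := ?w]))"
    by (rule S_inv_linear) (use xs in simp_all)
  also have "B (xs[i := ?w]) = smul (x$2$1) (B (xs[i := Ff])) + smul (x$1$1) (B (xs[i := Hh]))"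
    by (rule S_inv_linear) (use xs in simp_all)
  finally show ?thesis
    by (simp add: add.assoc)
qed

lemma S_inv_smul_Cons:
  assumes x: "x \<in> sl2"
  shows "B (smul k x # xs) = smul k (B (x # xs))"
proof (cases "x # xs \<in> dom_g m")
  case True
  have "0 < m"
    using length_dom_g[OF True] by simp
  have "B ((x # xs)[0 := smul k x + smul 0 x]) = smul k (B ((x # xs)[0 := x])) + smul 0 (B ((x # xs)[0 := x]))"
    by (rule S_inv_linear) (use True \<open>0 < m\<close> x in simp_all)
  then show ?thesis
    by (simp add: smul_add_left[symmetric])
next
  case False
  with x show ?thesis
    by (simp add: S_inv_outside dom_g_def)
qed

lemma S_inv_0_Cons [simp]: "B (0 # xs) = 0"
  using S_inv_smul_Cons[of 0 0 xs] by simp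

lemma S_inv_Ff_Cons_monomial [simp]: "B (Ff # monomial a b c) = B (monomial a (Suc b) c)"
  by (rule S_inv_mset_eq) (simp add: mset_monomial)

lemma S_inv_Hh_Cons_monomial [simp]: "B (Hh # monomial a b c) = B (monomial a b (Suc c))"
  by (rule S_inv_mset_eq) (simp add: mset_monomial)

lemma S_inv_lie_monomial:
  assumes abc: "a + b + c = m" and y: "y \<in> sl2"
  shows "lie y (B (monomial a b c)) =
    smul (of_nat a) (B (lie y Ee # monomial (a - 1) b c)) +
    smul (of_nat b) (B (lie y Ff # monomial a (b - 1) c)) +
    smul (of_nat c) (B (lie y Hh # monomial a b (c - 1)))"
proof -
  let ?xs = "monomial a b c"
  have "lie y (B ?xs) = (\<Sum>i<a + b + c. B (?xs[i := lie y (?xs ! i)]))"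
    using S_inv_invariant[OF monomial_in_dom_g[OF abc] y] abc by simp
  also have "\<dots> = (\<Sum>i<a + b + c.
      if i < a then B (lie y Ee # monomial (a - 1) b c)
      else if i < a + b then B (lie y Ff # monomial a (b - 1) c)
      else B (lie y Hh # monomial a b (c - 1)))"
  proof (rule sum.cong)
    fix i assume "i \<in> {..<a + b + c}"
    then show "B (?xs[i := lie y (?xs ! i)]) = (if i < a then B (lie y Ee # monomial (a - 1) b c)
      else if i < a + b then B (lie y Ff # monomial a (b - 1) c)
      else B (lie y Hh # monomial a b (c - 1)))"
      by (simp add: S_inv_mset_eq[OF mset_monomial_update] nth_monomial)
  qed simp
  finally show ?thesis
    by (simp only: sum_three_blocks)
qed

lemma S_inv_lie_Ee_monomial:
  assumes "a + b + c = m"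
  shows "lie Ee (B (monomial a b c)) =
    smul (of_nat b) (B (monomial a (b - 1) (c + 1))) + smul (-2 * of_nat c) (B (monomial (a + 1) b (c - 1)))"
  using S_inv_lie_monomial[OF assms, of Ee]
  by (simp add: S_inv_smul_Cons monomial_Suc_Ee[symmetric] mult.commute)

lemma S_inv_lie_Ff_monomial:
  assumes "a + b + c = m"
  shows "lie Ff (B (monomial a b c)) =
    smul (- of_nat a) (B (monomial (a - 1) b (c + 1))) + smul (2 * of_nat c) (B (monomial a (b + 1) (c - 1)))"
  using S_inv_lie_monomial[OF assms, of Ff]
  by (simp add: S_inv_smul_Cons mult.commute)

lemma S_inv_lie_Hh_monomial:
  assumes "a + b + c = m"
  shows "lie Hh (B (monomial a b c)) = smul (2 * of_nat a - 2 * of_nat b) (B (monomial a b c))"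
proof -
  have "smul (of_nat a) (B (smul 2 Ee # monomial (a - 1) b c)) = smul (2 * of_nat a) (B (monomial a b c))"
    by (cases a) (simp_all add: S_inv_smul_Cons monomial_Suc_Ee[symmetric] mult.commute)
  moreover have "smul (of_nat b) (B (smul (-2) Ff # monomial a (b - 1) c)) = smul (-2 * of_nat b) (B (monomial a b c))"
    by (cases b) (simp_all add: S_inv_smul_Cons mult.commute)
  ultimately show ?thesis
    using S_inv_lie_monomial[OF assms, of Hh] by (simp add: smul_add_left[symmetric])
qed

lemma S_inv_monomial_eq_0:
  assumes h: "B (monomial 0 0 m) = 0"
  shows "a + b + c = m \<Longrightarrow> B (monomial a b c) = 0"
proof (induction "a + b" arbitrary: a b c rule: less_induct)
  case less
  consider "0 < a" | "a = 0" "0 < b" | "a = 0" "b = 0"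
    by blast
  then show ?case
  proof cases
    case 1
    have "lie Ee (B (monomial (a - 1) b (c + 1))) =
        smul (of_nat b) (B (monomial (a - 1) (b - 1) (c + 2))) + smul (-2 * of_nat (c + 1)) (B (monomial a b c))"
      using S_inv_lie_Ee_monomial[of "a - 1" b "c + 1"] 1 less.prems by simp
    moreover have "B (monomial (a - 1) b (c + 1)) = 0"
      using less 1 by simp
    moreover have "smul (of_nat b) (B (monomial (a - 1) (b - 1) (c + 2))) = 0"
      using less 1 by (cases b) simp_all
    ultimately have "smul (-2 * of_nat (c + 1)) (B (monomial a b c)) = 0"
      by simp
    then show ?thesis
      by (simp add: smul_eq_0_iff del: of_nat_Suc)
  next
    case 2
    have "lie Ff (B (monomial 0 (b - 1) (c + 1))) = smul (2 * of_nat (c + 1)) (B (monomial 0 b c))"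
      using S_inv_lie_Ff_monomial[of 0 "b - 1" "c + 1"] 2 less.prems by simp
    moreover have "B (monomial 0 (b - 1) (c + 1)) = 0"
      using less 2 by simp
    ultimately have "smul (2 * of_nat (c + 1)) (B (monomial a b c)) = 0"
      using 2 by simp
    then show ?thesis
      by (simp add: smul_eq_0_iff del: of_nat_Suc)
  next
    case 3
    then show ?thesis
      using h less.prems by simp
  qed
qed

lemma S_inv_basis_list_eq_0:
  assumes monomials: "\<And>a b c. a + b + c = m \<Longrightarrow> B (monomial a b c) = 0"
    and xs: "xs \<in> dom_g m" "set xs \<subseteq> {Ee, Ff, Hh}"
  shows "B xs = 0"
proof -
  let ?a = "count (mset xs) Ee" and ?b = "count (mset xs) Ff" and ?c = "count (mset xs) Hh"
  have mset_eq: "mset xs = mset (monomial ?a ?b ?c)"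
    using xs(2) by (rule mset_basis_list)
  then have "?a + ?b + ?c = m"
    using length_dom_g[OF xs(1)] by (metis length_monomial size_mset)
  then show ?thesis
    using S_inv_mset_eq[OF mset_eq] monomials by simp
qed

lemma S_inv_eq_0_if_eq_0_on_basis_lists:
  assumes basis: "\<And>xs. xs \<in> dom_g m \<Longrightarrow> set xs \<subseteq> {Ee, Ff, Hh} \<Longrightarrow> B xs = 0"
  shows "B xs = 0"
proof -
  txt \<open>Induction on the number k of leading entries that are not required to be basis
    vectors; entry k is expanded into the basis.\<close>
  have "\<forall>xs \<in> dom_g m. set (drop k xs) \<subseteq> {Ee, Ff, Hh} \<longrightarrow> B xs = 0" for k
  proof (induction k)
    case 0
    then show ?case
      using basis by simp
  next
    case (Suc k)
    show ?case
    proof (intro ballI impI)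
      fix xs assume xs: "xs \<in> dom_g m" and tail: "set (drop (Suc k) xs) \<subseteq> {Ee, Ff, Hh}"
      show "B xs = 0"
      proof (cases "k < m")
        case True
        have "length xs = m"
          using xs by (rule length_dom_g)
        then have "B (xs[k := z]) = 0" if "z \<in> {Ee, Ff, Hh}" for z
          using Suc.IH list_update_in_dom_g[OF xs, of z k] tail that True
          by (auto simp: Cons_nth_drop_Suc[symmetric] drop_update_cancel)
        moreover have "B xs = B (xs[k := xs ! k])"
          by simp
        ultimately show ?thesis
          using S_inv_basis_expansion[OF xs True nth_in_sl2_dom_g[OF xs True]] by simp
      next
        case False
        then show ?thesis
          using Suc.IH xs tail length_dom_g[OF xs] by simp
      qed
    qed
  qed
  from this[of m] show ?thesis
    using S_inv_outside length_dom_g by (cases "xs \<in> dom_g m") auto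
qed

lemma S_inv_eq_0_if_h_power_eq_0: "B (monomial 0 0 m) = 0 \<Longrightarrow> B = (\<lambda>_. 0)"
  using S_inv_eq_0_if_eq_0_on_basis_lists S_inv_basis_list_eq_0 S_inv_monomial_eq_0 by blast

lemma S_inv_h_power: "B (monomial 0 0 m) = smul ((B (monomial 0 0 m))$1$1) Hh"
  using S_inv_lie_Hh_monomial[of 0 0 m] by (simp add: weight_0_vector S_inv_in_sl2)

end

section \<open>The even case\<close>

text \<open>In the application, w a and v a are the coordinates of B on e^a f^a h^(2N-2a) (of weight 0,
  a multiple of h) and on e^(a+1) f^a h^(2N-2a-1) (of weight 2, a multiple of e); the hypotheses
  are the invariance under e and f.\<close>

lemma zero_weight_recurrence_step:
  fixes w v :: "nat \<Rightarrow> complex"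
  assumes a: "a < N"
    and E: "2 * of_nat (2*N - 2*a) * v a = 2 * w a + of_nat a * v (a - 1)"
    and F: "v a = of_nat (a + 1) * w a - 2 * of_nat (2*N - 2*a - 1) * w (a + 1)"
    and prev: "0 < a \<longrightarrow> v (a - 1) = 2 * w a"
  shows "of_nat (a + 1) * w a = 2 * of_nat (2*N - 2*a) * w (a + 1)" and "v a = 2 * w (a + 1)"
proof -
  define c :: complex where "c = of_nat (2*N - 2*a)"
  have k: "2 \<le> 2*N - 2*a"
    using a by simp
  then have c1: "of_nat (2*N - 2*a - 1) = c - 1"
    by (simp add: c_def of_nat_diff)
  have "c - 1 \<noteq> 0"
    unfolding c1[symmetric] of_nat_eq_0_iff using k by simp
  moreover have "c \<noteq> 0"
    using k by (simp add: c_def)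
  have "of_nat a * v (a - 1) = 2 * of_nat a * w a"
    using prev by (cases a) simp_all
  with E have "2 * (c * v a) = 2 * (of_nat (a + 1) * w a)"
    by (simp add: c_def algebra_simps)
  then have cv: "c * v a = of_nat (a + 1) * w a"
    by simp
  have "v a = of_nat (a + 1) * w a - 2 * (c - 1) * w (a + 1)"
    using F unfolding c1 .
  then have "(c - 1) * (of_nat (a + 1) * w a) = (c - 1) * (2 * c * w (a + 1))"
    using cv by algebra
  ultimately have w_Suc: "of_nat (a + 1) * w a = 2 * c * w (a + 1)"
    by simp
  then show "of_nat (a + 1) * w a = 2 * of_nat (2*N - 2*a) * w (a + 1)"
    by (simp only: c_def)
  show "v a = 2 * w (a + 1)"
    using cv w_Suc \<open>c \<noteq> 0\<close> by (simp add: mult.left_commute)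
qed

lemma zero_weight_recurrence:
  fixes w v :: "nat \<Rightarrow> complex"
  assumes E: "\<And>a. a \<le> N \<Longrightarrow> 2 * of_nat (2*N - 2*a) * v a = 2 * w a + of_nat a * v (a - 1)"
    and F: "\<And>a. a < N \<Longrightarrow> v a = of_nat (a + 1) * w a - 2 * of_nat (2*N - 2*a - 1) * w (a + 1)"
  shows "w 0 = 0"
proof (rule ccontr)
  assume w0: "w 0 \<noteq> 0"
  have "w a \<noteq> 0 \<and> (0 < a \<longrightarrow> v (a - 1) = 2 * w a)" if "a \<le> N" for a
    using that
  proof (induction a)
    case 0
    then show ?case
      using w0 by simp
  next
    case (Suc a)
    then have a: "a < N" and IH: "w a \<noteq> 0" "0 < a \<longrightarrow> v (a - 1) = 2 * w a"
      by auto
    note step = zero_weight_recurrence_step[OF a E[OF less_imp_le[OF a]] F[OF a] IH(2)]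
    then show ?case
      using IH(1) of_nat_neq_0[of a, where 'a = complex] by auto
  qed
  then have wN: "w N \<noteq> 0" "0 < N \<longrightarrow> v (N - 1) = 2 * w N"
    by auto
  have "0 = 2 * w N + of_nat N * v (N - 1)"
    using E[of N] by simp
  also have "of_nat N * v (N - 1) = 2 * of_nat N * w N"
    using wN(2) by (cases N) simp_all
  finally have "of_nat (2 + 2 * N) * w N = 0"
    by (simp add: algebra_simps)
  moreover have "of_nat (2 + 2 * N) \<noteq> (0::complex)"
    by (simp only: of_nat_eq_0_iff)
  ultimately show False
    using wN(1) by simp
qed

lemma S_inv_even_h_power_eq_0:
  assumes B: "B \<in> S_inv (2*N)"
  shows "B (monomial 0 0 (2*N)) = 0"
proof -
  define w where "w a = (B (monomial a a (2*N - 2*a)))$1$1" for a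
  define v where "v a = (B (monomial (a + 1) a (2*N - 2*a - 1)))$1$2" for a
  have W: "B (monomial a a (2*N - 2*a)) = smul (w a) Hh" if "a \<le> N" for a
    using S_inv_lie_Hh_monomial[OF B, of a a "2*N - 2*a"] that
    by (simp add: w_def weight_0_vector S_inv_in_sl2[OF B])
  have "w 0 = 0"
  proof (rule zero_weight_recurrence)
    fix a assume a: "a \<le> N"
    let ?X = "B (monomial a (a - 1) (2*N - 2*a + 1))"
    have "lie Ee (B (monomial a a (2*N - 2*a))) =
        smul (of_nat a) ?X + smul (-2 * of_nat (2*N - 2*a)) (B (monomial (a + 1) a (2*N - 2*a - 1)))"
      using S_inv_lie_Ee_monomial[OF B, of a a "2*N - 2*a"] a by simp
    from arg_cong[OF this, of "\<lambda>X. X$1$2"]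
    have "-2 * w a = of_nat a * ?X$1$2 - 2 * of_nat (2*N - 2*a) * v a"
      using W[OF a] by (simp add: v_def)
    moreover have "of_nat a * ?X$1$2 = of_nat a * v (a - 1)"
      using a by (cases a) (simp_all add: v_def Suc_diff_Suc)
    ultimately show "2 * of_nat (2*N - 2*a) * v a = 2 * w a + of_nat a * v (a - 1)"
      by (simp add: algebra_simps)
  next
    fix a assume a: "a < N"
    have "lie Ff (B (monomial (a + 1) a (2*N - 2*a - 1))) =
        smul (- of_nat (a + 1)) (B (monomial a a (2*N - 2*a))) +
        smul (2 * of_nat (2*N - 2*a - 1)) (B (monomial (a + 1) (a + 1) (2*N - 2*(a + 1))))"
      using S_inv_lie_Ff_monomial[OF B, of "a + 1" a "2*N - 2*a - 1"] a by (simp add: Suc_diff_Suc)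
    from arg_cong[OF this, of "\<lambda>X. X$1$1"]
    have "- v a = - of_nat (a + 1) * w a + 2 * of_nat (2*N - 2*a - 1) * w (a + 1)"
      by (simp add: v_def w_def)
    then show "v a = of_nat (a + 1) * w a - 2 * of_nat (2*N - 2*a - 1) * w (a + 1)"
      by (simp add: algebra_simps)
  qed
  then show ?thesis
    using S_inv_h_power[OF B] by (simp add: w_def)
qed

section \<open>The invariant map B_n\<close>

lemma permutes_less: "\<sigma> permutes {..<N} \<Longrightarrow> k < N \<Longrightarrow> \<sigma> k < N"
  using permutes_in_image by fastforce

definition pair_prod :: "nat \<Rightarrow> (nat \<Rightarrow> nat) \<Rightarrow> mat2 list \<Rightarrow> complex" where
  "pair_prod n \<sigma> zs = (\<Prod>j<n. form (zs ! \<sigma> (2*j)) (zs ! \<sigma> (2*j+1)))"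

lemma P_poly_eq_pair_prod:
  "P_poly n zs = (\<Sum>\<sigma>\<in>{\<sigma>. \<sigma> permutes {..<2*n}}. pair_prod n \<sigma> zs) / fact (2*n)"
  by (simp add: P_poly_def pair_prod_def)

lemma pair_prod_update:
  assumes \<sigma>: "\<sigma> permutes {..<2*n}" and j0: "j0 < n" and i: "i = \<sigma> (2*j0) \<or> i = \<sigma> (2*j0+1)"
  shows "pair_prod n \<sigma> (zs[i := z]) =
    form (zs[i := z] ! \<sigma> (2*j0)) (zs[i := z] ! \<sigma> (2*j0+1)) *
    (\<Prod>j\<in>{..<n} - {j0}. form (zs ! \<sigma> (2*j)) (zs ! \<sigma> (2*j+1)))"
proof -
  let ?f = "\<lambda>zs j. form (zs ! \<sigma> (2*j)) (zs ! \<sigma> (2*j+1))"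
  have "i \<noteq> \<sigma> (2*j) \<and> i \<noteq> \<sigma> (2*j+1)" if "j \<noteq> j0" for j
    using i that permutes_inj[OF \<sigma>] by (auto simp: inj_eq)
  then have "(\<Prod>j\<in>{..<n} - {j0}. ?f (zs[i := z]) j) = (\<Prod>j\<in>{..<n} - {j0}. ?f zs j)"
    by (intro prod.cong) auto
  moreover have "pair_prod n \<sigma> (zs[i := z]) = ?f (zs[i := z]) j0 * (\<Prod>j\<in>{..<n} - {j0}. ?f (zs[i := z]) j)"
    unfolding pair_prod_def using j0 by (simp add: prod.remove)
  ultimately show ?thesis
    by simp
qed

lemma form_update_linear:
  assumes "p \<noteq> q" "i = p \<or> i = q" "i < length zs"
  shows "form (zs[i := smul a x + smul b y] ! p) (zs[i := smul a x + smul b y] ! q) =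
    a * form (zs[i := x] ! p) (zs[i := x] ! q) + b * form (zs[i := y] ! p) (zs[i := y] ! q)"
  using assms by (auto simp: form_linear_left form_linear_right)

lemma pair_prod_linear:
  assumes \<sigma>: "\<sigma> permutes {..<2*n}" and i: "i < 2*n" and len: "length zs = 2*n"
  shows "pair_prod n \<sigma> (zs[i := smul a x + smul b y]) =
    a * pair_prod n \<sigma> (zs[i := x]) + b * pair_prod n \<sigma> (zs[i := y])"
proof -
  define j0 where "j0 = inv \<sigma> i div 2"
  have "inv \<sigma> i < 2*n"
    using permutes_less[OF permutes_inv[OF \<sigma>] i] .
  then have j0: "j0 < n"
    by (simp add: j0_def)
  have "\<sigma> (inv \<sigma> i) = i"
    using permutes_inverses(1)[OF \<sigma>] .
  then have i_pair: "i = \<sigma> (2*j0) \<or> i = \<sigma> (2*j0+1)"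
    unfolding j0_def by (metis dvd_mult_div_cancel odd_two_times_div_two_succ)
  have "\<sigma> (2*j0) \<noteq> \<sigma> (2*j0+1)"
    using permutes_inj[OF \<sigma>] by (auto simp: inj_eq)
  then show ?thesis
    unfolding pair_prod_update[OF \<sigma> j0 i_pair]
    using form_update_linear[of "\<sigma> (2*j0)" "\<sigma> (2*j0+1)" i zs] i_pair i len
    by (simp add: algebra_simps)
qed

lemma P_poly_linear:
  assumes "i < 2*n" "length zs = 2*n"
  shows "P_poly n (zs[i := smul a x + smul b y]) = a * P_poly n (zs[i := x]) + b * P_poly n (zs[i := y])"
proof -
  let ?S = "{\<sigma>. \<sigma> permutes {..<2*n}}"
  have "(\<Sum>\<sigma>\<in>?S. pair_prod n \<sigma> (zs[i := smul a x + smul b y])) =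
      (\<Sum>\<sigma>\<in>?S. a * pair_prod n \<sigma> (zs[i := x]) + b * pair_prod n \<sigma> (zs[i := y]))"
    by (rule sum.cong) (simp_all add: pair_prod_linear[OF _ assms])
  then show ?thesis
    by (simp add: P_poly_eq_pair_prod sum.distrib sum_distrib_left add_divide_distrib)
qed

lemma sum_lessThan_double: "(\<Sum>t<2*n. g t) = (\<Sum>j<n. g (2*j) + g (2*j+1::nat))"
  by (induction n) (simp_all add: algebra_simps)

text \<open>Each pair contributes form [y,u] v + form u [y,v] = 0.\<close>

lemma pair_prod_invariant:
  assumes \<sigma>: "\<sigma> permutes {..<2*n}" and len: "length zs = 2*n"
  shows "(\<Sum>i<2*n. pair_prod n \<sigma> (zs[i := lie y (zs ! i)])) = 0"
proof -
  let ?R = "\<lambda>j. \<Prod>j'\<in>{..<n} - {j}. form (zs ! \<sigma> (2*j')) (zs ! \<sigma> (2*j'+1))"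
  let ?u = "\<lambda>j. zs ! \<sigma> (2*j)" and ?v = "\<lambda>j. zs ! \<sigma> (2*j+1)"
  have inj: "\<sigma> (2*j) \<noteq> \<sigma> (2*j+1)" for j
    using permutes_inj[OF \<sigma>] by (auto simp: inj_eq)
  have len_\<sigma>: "\<sigma> k < length zs" if "k < 2*n" for k
    using permutes_less[OF \<sigma> that] len by simp
  have "(\<Sum>i<2*n. pair_prod n \<sigma> (zs[i := lie y (zs ! i)])) =
      (\<Sum>t<2*n. pair_prod n \<sigma> (zs[\<sigma> t := lie y (zs ! \<sigma> t)]))"
    using sum.permute[OF \<sigma>, of "\<lambda>i. pair_prod n \<sigma> (zs[i := lie y (zs ! i)])"] by (simp add: o_def)
  also have "\<dots> = (\<Sum>j<n. pair_prod n \<sigma> (zs[\<sigma> (2*j) := lie y (?u j)]) +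
      pair_prod n \<sigma> (zs[\<sigma> (2*j+1) := lie y (?v j)]))"
    by (rule sum_lessThan_double)
  also have "\<dots> = (\<Sum>j<n. (form (lie y (?u j)) (?v j) + form (?u j) (lie y (?v j))) * ?R j)"
  proof (rule sum.cong)
    fix j assume "j \<in> {..<n}"
    then have "j < n" "2*j < 2*n" "2*j+1 < 2*n"
      by auto
    then show "pair_prod n \<sigma> (zs[\<sigma> (2*j) := lie y (?u j)]) + pair_prod n \<sigma> (zs[\<sigma> (2*j+1) := lie y (?v j)]) =
        (form (lie y (?u j)) (?v j) + form (?u j) (lie y (?v j))) * ?R j"
      using inj[of j] len_\<sigma>
      by (simp add: pair_prod_update[OF \<sigma> \<open>j < n\<close>, of "\<sigma> (2*j)"]
          pair_prod_update[OF \<sigma> \<open>j < n\<close>, of "\<sigma> (Suc (2*j))"] distrib_right)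
  qed simp
  also have "\<dots> = 0"
    by (simp add: form_invariant)
  finally show ?thesis .
qed

lemma P_poly_invariant:
  assumes "length zs = 2*n"
  shows "(\<Sum>i<2*n. P_poly n (zs[i := lie y (zs ! i)])) = 0"
  using pair_prod_invariant[OF _ assms]
  by (simp add: P_poly_eq_pair_prod sum.swap[of _ "{\<sigma>. \<sigma> permutes {..<2*n}}"] flip: sum_divide_distrib)

lemma P_poly_mset_eq:
  assumes len: "length ys = 2*n" and mset_eq: "mset zs = mset ys"
  shows "P_poly n zs = P_poly n ys"
proof -
  obtain q where q: "q permutes {..<2*n}" "permute_list q ys = zs"
    using mset_eq_permutation[OF mset_eq] len by metis
  have "pair_prod n \<sigma> zs = pair_prod n (q \<circ> \<sigma>) ys" if "\<sigma> permutes {..<2*n}" for \<sigma>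
    unfolding pair_prod_def q(2)[symmetric] using that q(1) len
    by (intro prod.cong) (simp_all add: permute_list_nth permutes_less)
  then show ?thesis
    using setum_permutations_compose_left[OF q(1), of "\<lambda>\<sigma>. pair_prod n \<sigma> ys"]
    by (simp add: P_poly_eq_pair_prod)
qed

lemma P_poly_h_power: "P_poly n (replicate (2*n) Hh) = 4^n"
proof -
  have "pair_prod n \<sigma> (replicate (2*n) Hh) = 4^n" if \<sigma>: "\<sigma> permutes {..<2*n}" for \<sigma>
  proof -
    have "\<sigma> (2*j) < 2*n" "\<sigma> (2*j+1) < 2*n" if "j < n" for j
      using permutes_less[OF \<sigma>] that by simp_all
    then show ?thesis
      unfolding pair_prod_def by (simp add: form_Hh_Hh)
  qed
  moreover have "card {\<sigma>. \<sigma> permutes {..<2*n}} = fact (2*n)"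
    by (rule card_permutations) simp_all
  ultimately show ?thesis
    by (simp add: P_poly_eq_pair_prod)
qed

definition remove_nth :: "nat \<Rightarrow> 'a list \<Rightarrow> 'a list" where
  "remove_nth k xs = take k xs @ drop (Suc k) xs"

lemma length_remove_nth [simp]: "k < length xs \<Longrightarrow> length (remove_nth k xs) = length xs - 1"
  by (simp add: remove_nth_def)

lemma nth_remove_nth:
  "k < length xs \<Longrightarrow> j < length xs - 1 \<Longrightarrow> remove_nth k xs ! j = (if j < k then xs ! j else xs ! Suc j)"
  by (auto simp: remove_nth_def nth_append min_def)

lemma mset_remove_nth: "k < length xs \<Longrightarrow> mset (remove_nth k xs) = mset xs - {#xs ! k#}"
proof -
  assume k: "k < length xs"
  have "mset xs = mset (take k xs @ xs ! k # drop (Suc k) xs)"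
    using id_take_nth_drop[OF k] by simp
  then show ?thesis
    by (simp add: remove_nth_def)
qed

lemma remove_nth_update_same [simp]: "remove_nth k (xs[k := z]) = remove_nth k xs"
  by (simp add: remove_nth_def drop_update_cancel)

lemma remove_nth_update_other:
  "k < length xs \<Longrightarrow> i < length xs \<Longrightarrow> i \<noteq> k \<Longrightarrow>
   remove_nth k (xs[i := z]) = (remove_nth k xs)[(if i < k then i else i - 1) := z]"
  by (rule nth_equalityI) (auto simp: nth_remove_nth nth_list_update)

lemma sum_remove_nth_update:
  assumes k: "k < Suc N" and len: "length xs = Suc N"
  shows "(\<Sum>i\<in>{..<Suc N} - {k}. f (remove_nth k (xs[i := g (xs ! i)]))) =
    (\<Sum>i<N. f ((remove_nth k xs)[i := g (remove_nth k xs ! i)]))"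
proof (rule sum.reindex_bij_witness[where i = "\<lambda>i. if i < k then i else Suc i" and j = "\<lambda>i. if i < k then i else i - 1"])
  fix i assume "i \<in> {..<Suc N} - {k}"
  then show "f ((remove_nth k xs)[(if i < k then i else i - 1) := g (remove_nth k xs ! (if i < k then i else i - 1))]) =
      f (remove_nth k (xs[i := g (xs ! i)]))"
    using k len by (auto simp: remove_nth_update_other nth_remove_nth)
qed (use k in auto)

lemma B_g_eq:
  "xs \<in> dom_g (2*n+1) \<Longrightarrow> B_g n xs = (\<Sum>k<2*n+1. smul (P_poly n (remove_nth k xs)) (xs ! k))"
  by (simp add: B_g_def remove_nth_def)

lemma B_g_linear:
  assumes xs: "xs \<in> dom_g (2*n+1)" and i: "i < 2*n+1" and x: "x \<in> sl2" and y: "y \<in> sl2"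
  shows "B_g n (xs[i := smul a x + smul b y]) = smul a (B_g n (xs[i := x])) + smul b (B_g n (xs[i := y]))"
proof -
  let ?T = "\<lambda>z k. smul (P_poly n (remove_nth k (xs[i := z]))) (xs[i := z] ! k)"
  have len: "length xs = 2*n+1"
    using xs by (rule length_dom_g)
  have summand: "?T (smul a x + smul b y) k = smul a (?T x k) + smul b (?T y k)" if k: "k < 2*n+1" for k
  proof (cases "k = i")
    case True
    then show ?thesis
      using len k by (simp add: mat2_eq_iff algebra_simps)
  next
    case False
    let ?i = "if i < k then i else i - 1"
    have "?i < 2*n"
      using i k False by auto
    then have "P_poly n (remove_nth k (xs[i := smul a x + smul b y])) =
        a * P_poly n (remove_nth k (xs[i := x])) + b * P_poly n (remove_nth k (xs[i := y]))"
      using P_poly_linear[of ?i n "remove_nth k xs"] len k i False by (simp only: remove_nth_update_other) simp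
    then show ?thesis
      using False by (simp add: mat2_eq_iff algebra_simps)
  qed
  have "B_g n (xs[i := smul a x + smul b y]) = (\<Sum>k<2*n+1. smul a (?T x k) + smul b (?T y k))"
    using xs x y summand by (simp add: B_g_eq list_update_in_dom_g del: sum.lessThan_Suc)
  also have "\<dots> = smul a (B_g n (xs[i := x])) + smul b (B_g n (xs[i := y]))"
    using xs x y by (simp add: B_g_eq list_update_in_dom_g sum.distrib smul_sum_right del: sum.lessThan_Suc)
  finally show ?thesis .
qed

lemma B_g_permute:
  assumes xs: "xs \<in> dom_g (2*n+1)" and p: "p permutes {..<2*n+1}"
  shows "B_g n (map (\<lambda>i. xs ! p i) [0..<2*n+1]) = B_g n xs"
proof -
  let ?ys = "map (\<lambda>i. xs ! p i) [0..<2*n+1]"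
  let ?g = "\<lambda>k. smul (P_poly n (remove_nth k xs)) (xs ! k)"
  have len: "length xs = 2*n+1"
    using xs by (rule length_dom_g)
  then have ys: "?ys = permute_list p xs"
    by (simp add: permute_list_def)
  have ys_dom: "?ys \<in> dom_g (2*n+1)"
    using xs permutes_less[OF p] by (auto simp: dom_g_def)
  have "smul (P_poly n (remove_nth k ?ys)) (?ys ! k) = ?g (p k)" if k: "k < 2*n+1" for k
  proof -
    have pk: "p k < 2*n+1"
      using permutes_less[OF p k] .
    have "mset (remove_nth k ?ys) = mset (remove_nth (p k) xs)"
      using k pk len p unfolding ys by (simp add: mset_remove_nth permute_list_nth)
    then have "P_poly n (remove_nth k ?ys) = P_poly n (remove_nth (p k) xs)"
      by (rule P_poly_mset_eq[rotated]) (use pk len in simp)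
    then show ?thesis
      using k by (simp del: upt_Suc)
  qed
  then have "B_g n ?ys = (\<Sum>k<2*n+1. ?g (p k))"
    using ys_dom by (simp add: B_g_eq del: sum.lessThan_Suc upt_Suc)
  also have "\<dots> = B_g n xs"
    using sum.permute[OF p, of ?g] xs by (simp add: B_g_eq o_def)
  finally show ?thesis .
qed

lemma B_g_invariant:
  assumes xs: "xs \<in> dom_g (2*n+1)" and y: "y \<in> sl2"
  shows "lie y (B_g n xs) = (\<Sum>i<2*n+1. B_g n (xs[i := lie y (xs ! i)]))"
proof -
  have len: "length xs = 2*n+1"
    using xs by (rule length_dom_g)
  let ?T = "\<lambda>i k. smul (P_poly n (remove_nth k (xs[i := lie y (xs ! i)]))) (xs[i := lie y (xs ! i)] ! k)"
  have inner: "(\<Sum>i<2*n+1. ?T i k) = smul (P_poly n (remove_nth k xs)) (lie y (xs ! k))"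
    if k: "k < 2*n+1" for k
  proof -
    let ?zs = "remove_nth k xs"
    have "(\<Sum>i\<in>{..<2*n+1} - {k}. ?T i k) =
        smul (\<Sum>i\<in>{..<2*n+1} - {k}. P_poly n (remove_nth k (xs[i := lie y (xs ! i)]))) (xs ! k)"
      unfolding sum_smul_left[symmetric] by (rule sum.cong) auto
    also have "\<dots> = smul (\<Sum>i<2*n. P_poly n (?zs[i := lie y (?zs ! i)])) (xs ! k)"
      using sum_remove_nth_update[of k "2*n" xs "P_poly n" "lie y"] k len by simp
    also have "\<dots> = 0"
      using P_poly_invariant[of ?zs n y] k len by simp
    finally have "(\<Sum>i\<in>{..<2*n+1} - {k}. ?T i k) = 0" .
    moreover have "(\<Sum>i<2*n+1. ?T i k) = ?T k k + (\<Sum>i\<in>{..<2*n+1} - {k}. ?T i k)"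
      using k by (simp add: sum.remove del: sum.lessThan_Suc)
    ultimately show ?thesis
      using k len by simp
  qed
  have "(\<Sum>i<2*n+1. B_g n (xs[i := lie y (xs ! i)])) = (\<Sum>i<2*n+1. \<Sum>k<2*n+1. ?T i k)"
    using xs by (simp add: B_g_eq list_update_in_dom_g del: sum.lessThan_Suc)
  also have "\<dots> = (\<Sum>k<2*n+1. smul (P_poly n (remove_nth k xs)) (lie y (xs ! k)))"
    by (subst sum.swap) (intro sum.cong refl inner, simp)
  also have "\<dots> = lie y (B_g n xs)"
    using xs by (simp add: B_g_eq lie_sum_right lie_smul_right del: sum.lessThan_Suc)
  finally show ?thesis ..
qed

lemma B_g_in_S_inv: "B_g n \<in> S_inv (2*n+1)"
  unfolding S_inv_def
proof (intro CollectI conjI ballI allI impI)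
  fix xs :: "mat2 list"
  assume "xs \<notin> dom_g (2*n+1)"
  then show "B_g n xs = 0"
    by (simp add: B_g_def)
next
  fix xs assume xs: "xs \<in> dom_g (2*n+1)"
  then show "B_g n xs \<in> sl2"
    unfolding B_g_eq[OF xs] by (intro sum_in_sl2 smul_in_sl2 nth_in_sl2_dom_g[OF xs]) auto
next
  fix xs i x y a b
  assume "xs \<in> dom_g (2*n+1)" "i < 2*n+1" "x \<in> sl2" "y \<in> sl2"
  then show "B_g n (xs[i := smul a x + smul b y]) = smul a (B_g n (xs[i := x])) + smul b (B_g n (xs[i := y]))"
    by (rule B_g_linear)
next
  fix xs p
  assume "xs \<in> dom_g (2*n+1)" "p permutes {..<2*n+1}"
  then show "B_g n (map (\<lambda>i. xs ! p i) [0..<2*n+1]) = B_g n xs"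
    by (rule B_g_permute)
next
  fix xs y
  assume "xs \<in> dom_g (2*n+1)" "y \<in> sl2"
  then show "lie y (B_g n xs) = (\<Sum>i<2*n+1. B_g n (xs[i := lie y (xs ! i)]))"
    by (rule B_g_invariant)
qed

lemma B_g_h_power: "B_g n (monomial 0 0 (2*n+1)) = smul (of_nat (2*n+1) * 4^n) Hh"
proof -
  have "remove_nth k (replicate (2*n+1) Hh) = replicate (2*n) Hh" if "k < 2*n+1" for k
    using that by (intro nth_equalityI) (simp_all add: nth_remove_nth del: replicate_Suc)
  then have "B_g n (monomial 0 0 (2*n+1)) = (\<Sum>k<2*n+1. smul (4^n) Hh)"
    using monomial_in_dom_g[of 0 0 "2*n+1"]
    by (simp add: B_g_eq monomial_def P_poly_h_power del: replicate_Suc sum.lessThan_Suc)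
  then show ?thesis
    by (simp del: sum_constant add: sum_constant_mat2)
qed

lemma zero_in_S_inv: "(\<lambda>_. 0) \<in> S_inv m"
  unfolding S_inv_def by simp

lemma S_inv_lincomb:
  assumes B1: "B1 \<in> S_inv m" and B2: "B2 \<in> S_inv m"
  shows "(\<lambda>xs. smul c1 (B1 xs) + smul c2 (B2 xs)) \<in> S_inv m"
  unfolding S_inv_def
proof (intro CollectI conjI ballI allI impI)
  fix xs :: "mat2 list"
  assume "xs \<notin> dom_g m"
  then show "smul c1 (B1 xs) + smul c2 (B2 xs) = 0"
    using S_inv_outside[OF B1] S_inv_outside[OF B2] by simp
next
  fix xs :: "mat2 list"
  show "smul c1 (B1 xs) + smul c2 (B2 xs) \<in> sl2"
    using S_inv_in_sl2[OF B1] S_inv_in_sl2[OF B2] by simp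
next
  fix xs i x y a b
  assume h: "xs \<in> dom_g m" "i < m" "x \<in> sl2" "y \<in> sl2"
  show "smul c1 (B1 (xs[i := smul a x + smul b y])) + smul c2 (B2 (xs[i := smul a x + smul b y])) =
      smul a (smul c1 (B1 (xs[i := x])) + smul c2 (B2 (xs[i := x]))) +
      smul b (smul c1 (B1 (xs[i := y])) + smul c2 (B2 (xs[i := y])))"
    unfolding S_inv_linear[OF B1 h] S_inv_linear[OF B2 h] by (simp add: mat2_eq_iff algebra_simps)
next
  fix xs p
  assume "xs \<in> dom_g m" "p permutes {..<m}"
  then show "smul c1 (B1 (map (\<lambda>i. xs ! p i) [0..<m])) + smul c2 (B2 (map (\<lambda>i. xs ! p i) [0..<m])) =
      smul c1 (B1 xs) + smul c2 (B2 xs)"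
    using S_inv_permute[OF B1] S_inv_permute[OF B2] by simp
next
  fix xs y
  assume h: "xs \<in> dom_g m" "y \<in> sl2"
  show "lie y (smul c1 (B1 xs) + smul c2 (B2 xs)) =
      (\<Sum>i<m. smul c1 (B1 (xs[i := lie y (xs ! i)])) + smul c2 (B2 (xs[i := lie y (xs ! i)])))"
    using S_inv_invariant[OF B1 h] S_inv_invariant[OF B2 h]
    by (simp add: lie_add_right lie_smul_right smul_sum_right sum.distrib)
qed

lemma S_inv_even: "S_inv (2*N) = {\<lambda>_. 0}"
  using S_inv_eq_0_if_h_power_eq_0 S_inv_even_h_power_eq_0 zero_in_S_inv by blast

lemma S_inv_odd: "S_inv (2*n+1) = {B. \<exists>c. B = (\<lambda>xs. smul c (B_g n xs))}"
proof (intro equalityI subsetI)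
  fix B assume B: "B \<in> S_inv (2*n+1)"
  define g :: complex where "g = of_nat (2*n+1) * 4^n"
  define c where "c = (B (monomial 0 0 (2*n+1)))$1$1 / g"
  have "g \<noteq> 0"
    unfolding g_def by (simp del: of_nat_Suc)
  let ?D = "\<lambda>xs. smul 1 (B xs) + smul (-c) (B_g n xs)"
  have "?D \<in> S_inv (2*n+1)"
    by (rule S_inv_lincomb[OF B B_g_in_S_inv])
  moreover have "?D (monomial 0 0 (2*n+1)) = 0"
    using S_inv_h_power[OF B] B_g_h_power[of n] \<open>g \<noteq> 0\<close>
    by (simp add: mat2_eq_iff c_def g_def)
  ultimately have "?D = (\<lambda>_. 0)"
    by (rule S_inv_eq_0_if_h_power_eq_0)
  then have "B = (\<lambda>xs. smul c (B_g n xs))"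
    by (auto simp: fun_eq_iff mat2_eq_iff algebra_simps dest!: fun_cong)
  then show "B \<in> {B. \<exists>c. B = (\<lambda>xs. smul c (B_g n xs))}"
    by blast
next
  fix B assume "B \<in> {B. \<exists>c. B = (\<lambda>xs. smul c (B_g n xs))}"
  then obtain c where "B = (\<lambda>xs. smul c (B_g n xs))"
    by blast
  moreover have "(\<lambda>xs. smul c (B_g n xs) + smul 0 (B_g n xs)) \<in> S_inv (2*n+1)"
    by (rule S_inv_lincomb[OF B_g_in_S_inv B_g_in_S_inv])
  ultimately show "B \<in> S_inv (2*n+1)"
    by simp
qed

theorem theorem5:
  fixes n :: nat
  assumes "n \<ge> 1"
  shows "S_inv (2*n) = {\<lambda>_. 0} \<and> S_inv (2*n+1) = {B. \<exists>c. B = (\<lambda>xs. smul c (B_g n xs))}"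
  using S_inv_even S_inv_odd by blast

end
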